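(* Let $h(\cdot,\theta)=[h_1(\cdot,\theta),\dots,h_q(\cdot,\theta)]^T:\mathbb{R}^p\to\mathbb{R}^q$ be continuously differentiable in $x$ (for a fixed parameter $\theta$). For each $r\in\{1,\dots,q\}$ let $$b_r:=\sup_{x\in\mathbb{R}^p}\|\nabla_x h_r(x,\theta)\|_2,$$ and assume $0<b_r<\infty$. Fix $0<c<1$ and define $$\mathcal{B}_r:=\{x\in\mathbb{R}^p:\ \|\nabla_x h_r(x,\theta)\|_2>c\cdot b_r\},\qquad r\in\{1,\dots,q\}.$$ Suppose that $\mu\left(\bigcup_{r=1}^q\mathcal{B}_r\right)<C$ for some finite constant $C$, where $\mu$ is Lebesgue measure on $\mathbb{R}^p$. Then for every $\epsilon>0$ there exists a probability distribution $\mathcal{P}$ on $\mathbb{R}^p$ such that $$\sup_{x\in\mathbb{R}^p}\left\|\mathbb{E}_{\eta\sim\mathcal{P}}\,\nabla_x h_r(x+\eta,\theta)\right\|_2<(c+\epsilon)\cdot b_r\qquad\text{for all } r\in\{1,\dots,q\}.$$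
   Context: $h$ represents a single neural network layer with parameters $\theta$; $\nabla_x h_r(x,\theta)\in\mathbb{R}^p$ is the gradient of the $r$-th output coordinate with respect to the input $x$, and $\|\cdot\|_2$ is the Euclidean norm. The expectation is over a random perturbation $\eta$ of the input drawn from $\mathcal{P}$. *)

theory Defs
  imports "HOL-Probability.Probability"
begin

end

theory Submission
  imports Defs
begin

text \<open>Average each gradient over the uniform distribution on a large cube \<open>S\<close>. At every point
  the translated gradient has norm at most \<open>c b\<^sub>r\<close> off a translate of \<open>\<B>\<^sub>r\<close> and at most \<open>b\<^sub>r\<close>
  on it; since translation preserves Lebesgue measure, that translate carries probability at
  most \<open>C / \<mu>(S)\<close>. So the averaged gradient has norm at most \<open>c b\<^sub>r + b\<^sub>r C / \<mu>(S)\<close>, which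
  is below \<open>(c + \<epsilon>) b\<^sub>r\<close> once \<open>\<mu>(S) > C / \<epsilon>\<close>.\<close>

lemma emeasure_lborel_translate_vimage:
  fixes D :: "'a::euclidean_space set"
  assumes "D \<in> sets borel"
  shows "emeasure lborel ((+) x -` D) = emeasure lborel D"
proof -
  have "emeasure lborel ((+) x -` D) = emeasure (distr lborel borel ((+) x)) D"
    using assms by (subst emeasure_distr) (auto simp: Int_absorb2)
  then show ?thesis
    by (simp add: lborel_distr_plus)
qed

lemma measure_lborel_cube:
  fixes L :: real
  assumes "0 \<le> L"
  shows "measure lborel (cbox 0 (L *\<^sub>R One) :: 'a::euclidean_space set) = L ^ DIM('a)"
proof -
  have "emeasure lborel (cbox 0 (L *\<^sub>R One) :: 'a set) = ennreal (\<Prod>i\<in>(Basis::'a set). L)"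
    using assms by (simp add: emeasure_lborel_cbox_eq inner_simps cong: prod.cong)
  then show ?thesis
    using assms by (simp add: measure_def)
qed

lemma exists_lborel_set_measure_ge:
  "\<exists>S :: 'a::euclidean_space set. S \<in> sets lborel \<and> emeasure lborel S \<noteq> 0 \<and>
     emeasure lborel S \<noteq> \<infinity> \<and> M \<le> measure lborel S"
proof -
  define L where "L = max 1 M"
  have "L \<le> L ^ DIM('a)"
    unfolding L_def by (intro self_le_power) auto
  then have "M \<le> measure lborel (cbox 0 (L *\<^sub>R One) :: 'a set)"
    "1 \<le> measure lborel (cbox 0 (L *\<^sub>R One) :: 'a set)"
    unfolding L_def by (simp_all add: measure_lborel_cube)
  then show ?thesis
    using emeasure_lborel_cbox_finite[of 0 "L *\<^sub>R One"]
    by (intro exI[of _ "cbox 0 (L *\<^sub>R One)"]) (auto simp: measure_def)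
qed

lemma (in prob_space) norm_integral_le_off_event:
  fixes f :: "'a \<Rightarrow> 'b::{banach,second_countable_topology}"
  assumes f: "f \<in> borel_measurable M" and A: "A \<in> events"
    and bound: "\<And>x. norm (f x) \<le> b"
    and bound_off: "\<And>x. x \<notin> A \<Longrightarrow> norm (f x) \<le> a" and "0 \<le> a"
  shows "norm (\<integral>x. f x \<partial>M) \<le> a + b * prob A"
proof -
  have int_f: "integrable M f"
    using f bound by (intro integrable_const_bound[where B=b]) auto
  have int_bound: "integrable M (\<lambda>x. a + b * indicator A x :: real)"
    using A by (intro Bochner_Integration.integrable_add integrable_mult_right
        integrable_real_indicator) (auto simp: emeasure_finite less_top[symmetric])
  have pointwise: "norm (f x) \<le> a + b * indicator A x" for x
    using bound[of x] bound_off[of x] \<open>0 \<le> a\<close> by (cases "x \<in> A") auto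
  have "norm (\<integral>x. f x \<partial>M) \<le> (\<integral>x. norm (f x) \<partial>M)"
    by (rule integral_norm_bound)
  also have "\<dots> \<le> (\<integral>x. a + b * indicator A x \<partial>M)"
    using int_f int_bound by (intro integral_mono pointwise integrable_norm)
  also have "\<dots> = a + b * prob A"
    using A by (subst Bochner_Integration.integral_add)
      (auto simp: emeasure_finite less_top[symmetric] prob_space)
  finally show ?thesis .
qed

lemma measurable_uniform_measure_translate:
  fixes g :: "'a::euclidean_space \<Rightarrow> 'b::topological_space"
  assumes "g \<in> borel_measurable borel"
  shows "(\<lambda>\<eta>. g (x + \<eta>)) \<in> borel_measurable (uniform_measure lborel S)"
  using assms by (simp cong: measurable_cong_sets)

lemma integrable_uniform_measure_translate:
  fixes g :: "'a::euclidean_space \<Rightarrow> 'b::{banach,second_countable_topology}"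
  assumes g: "g \<in> borel_measurable borel" and bound: "\<And>y. norm (g y) \<le> b"
    and S: "S \<in> sets lborel" "emeasure lborel S \<noteq> 0" "emeasure lborel S \<noteq> \<infinity>"
  shows "integrable (uniform_measure lborel S) (\<lambda>\<eta>. g (x + \<eta>))"
proof -
  interpret prob_space "uniform_measure lborel S"
    using S by (intro prob_space_uniform_measure) auto
  show ?thesis
    using measurable_uniform_measure_translate[OF g] bound
    by (intro integrable_const_bound[where B=b]) auto
qed

lemma norm_integral_uniform_measure_translate_le:
  fixes g :: "'a::euclidean_space \<Rightarrow> 'b::{banach,second_countable_topology}"
  assumes g: "g \<in> borel_measurable borel"
    and bound: "\<And>y. norm (g y) \<le> b" and "0 \<le> c"
    and exceptional: "emeasure lborel {y. c * b < norm (g y)} \<le> ennreal C" and "0 \<le> C"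
    and S: "S \<in> sets lborel" "emeasure lborel S \<noteq> 0" "emeasure lborel S \<noteq> \<infinity>"
  shows "norm (\<integral>\<eta>. g (x + \<eta>) \<partial>uniform_measure lborel S) \<le> c * b + b * C / measure lborel S"
proof -
  let ?P = "uniform_measure lborel S"
  interpret P: prob_space ?P
    using S by (intro prob_space_uniform_measure) auto
  define D where "D = {y. c * b < norm (g y)}"
  have D: "D \<in> sets borel"
    unfolding D_def using g by measurable
  have D_shift: "(+) x -` D \<in> sets borel"
    by (intro measurable_sets_borel[OF _ D]) simp
  have "0 \<le> b"
    using bound[of 0] norm_ge_zero order_trans by blast
  have "emeasure lborel (S \<inter> (+) x -` D) \<le> emeasure lborel ((+) x -` D)"
    using D_shift by (intro emeasure_mono) auto
  also have "\<dots> = emeasure lborel D"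
    by (rule emeasure_lborel_translate_vimage[OF D])
  also have "\<dots> \<le> ennreal C"
    using exceptional by (simp add: D_def)
  finally have "measure lborel (S \<inter> (+) x -` D) \<le> C"
    using \<open>0 \<le> C\<close> by (simp add: measure_def enn2real_leI)
  then have prob_D: "P.prob ((+) x -` D) \<le> C / measure lborel S"
    using S D_shift by (simp add: divide_right_mono)
  have "norm (\<integral>\<eta>. g (x + \<eta>) \<partial>?P) \<le> c * b + b * P.prob ((+) x -` D)"
    using measurable_uniform_measure_translate[OF g] D \<open>0 \<le> c\<close> \<open>0 \<le> b\<close> bound
    by (intro P.norm_integral_le_off_event) (auto simp: D_def not_less)
  also have "\<dots> \<le> c * b + b * C / measure lborel S"
    using mult_left_mono[OF prob_D \<open>0 \<le> b\<close>] by simp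
  finally show ?thesis .
qed

theorem theorem4p1:
  fixes h :: "real^'p \<Rightarrow> real^'q"
    and G :: "'q \<Rightarrow> real^'p \<Rightarrow> real^'p"
    and c C :: real
  defines "b \<equiv> (\<lambda>r. SUP x. norm (G r x))"
      and "B \<equiv> (\<lambda>r. {x. norm (G r x) > c * (SUP y. norm (G r y))})"
  assumes grad: "\<And>r x. GDERIV (\<lambda>y. h y $ r) x :> G r x"
      and grad_cont: "\<And>r. continuous_on UNIV (G r)"
      and b_fin: "\<And>r. bdd_above (range (\<lambda>x. norm (G r x)))"
      and b_pos: "\<And>r. 0 < b r"
      and c: "0 < c" "c < 1"
      and meas: "emeasure lborel (\<Union>r. B r) < ennreal C"
  shows "\<forall>\<epsilon>>0. \<exists>P :: (real^'p) measure.
           prob_space P \<and> sets P = sets borel \<and>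
           (\<forall>r. (\<forall>x. integrable P (\<lambda>\<eta>. G r (x + \<eta>))) \<and>
                bdd_above (range (\<lambda>x. norm (\<integral>\<eta>. G r (x + \<eta>) \<partial>P))) \<and>
                (SUP x. norm (\<integral>\<eta>. G r (x + \<eta>) \<partial>P)) < (c + \<epsilon>) * b r)"
proof (intro allI impI)
  fix \<epsilon> :: real
  assume "0 < \<epsilon>"
  have "0 < C"
    using meas by (metis ennreal_less_zero_iff not_gr_zero zero_le order.strict_trans1)
  obtain S :: "(real^'p) set" where S: "S \<in> sets lborel" "emeasure lborel S \<noteq> 0"
      "emeasure lborel S \<noteq> \<infinity>" and large: "2 * C / \<epsilon> \<le> measure lborel S"
    using exists_lborel_set_measure_ge by blast
  have "0 < measure lborel S"
    using S by (simp add: measure_def enn2real_positive_iff less_top zero_less_iff_neq_zero)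
  then have small: "C / measure lborel S \<le> \<epsilon> / 2"
    using large \<open>0 < \<epsilon>\<close> by (simp add: field_simps)
  have exceptional_sets_open: "open (\<Union>r. B r)"
    unfolding B_def by (intro open_UN ballI open_Collect_less continuous_intros grad_cont)
  have average_le: "norm (\<integral>\<eta>. G r (x + \<eta>) \<partial>uniform_measure lborel S) \<le> (c + \<epsilon> / 2) * b r"
    and integrable: "integrable (uniform_measure lborel S) (\<lambda>\<eta>. G r (x + \<eta>))" for r x
  proof -
    have G: "G r \<in> borel_measurable borel"
      by (rule borel_measurable_continuous_onI[OF grad_cont])
    have bound: "norm (G r y) \<le> b r" for y
      unfolding b_def using b_fin by (intro cSUP_upper) auto
    have "emeasure lborel {y. c * b r < norm (G r y)} \<le> emeasure lborel (\<Union>r. B r)"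
      using exceptional_sets_open by (intro emeasure_mono) (auto simp: B_def b_def)
    then have exceptional: "emeasure lborel {y. c * b r < norm (G r y)} \<le> ennreal C"
      using meas by simp
    show "integrable (uniform_measure lborel S) (\<lambda>\<eta>. G r (x + \<eta>))"
      by (rule integrable_uniform_measure_translate[OF G bound S])
    have "norm (\<integral>\<eta>. G r (x + \<eta>) \<partial>uniform_measure lborel S) \<le> c * b r + b r * (C / measure lborel S)"
      using norm_integral_uniform_measure_translate_le[OF G bound _ exceptional _ S] c \<open>0 < C\<close> by simp
    also have "\<dots> \<le> (c + \<epsilon> / 2) * b r"
      using mult_left_mono[OF small less_imp_le[OF b_pos]] by (simp add: algebra_simps)
    finally show "norm (\<integral>\<eta>. G r (x + \<eta>) \<partial>uniform_measure lborel S) \<le> (c + \<epsilon> / 2) * b r" .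
  qed
  show "\<exists>P :: (real^'p) measure.
           prob_space P \<and> sets P = sets borel \<and>
           (\<forall>r. (\<forall>x. integrable P (\<lambda>\<eta>. G r (x + \<eta>))) \<and>
                bdd_above (range (\<lambda>x. norm (\<integral>\<eta>. G r (x + \<eta>) \<partial>P))) \<and>
                (SUP x. norm (\<integral>\<eta>. G r (x + \<eta>) \<partial>P)) < (c + \<epsilon>) * b r)"
  proof (intro exI[of _ "uniform_measure lborel S"] conjI allI)
    fix r
    show "bdd_above (range (\<lambda>x. norm (\<integral>\<eta>. G r (x + \<eta>) \<partial>uniform_measure lborel S)))"
      using average_le by (rule bdd_aboveI2)
    have "(SUP x. norm (\<integral>\<eta>. G r (x + \<eta>) \<partial>uniform_measure lborel S)) \<le> (c + \<epsilon> / 2) * b r"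
      by (intro cSUP_least average_le) simp
    also have "\<dots> < (c + \<epsilon>) * b r"
      using \<open>0 < \<epsilon>\<close> b_pos[of r] by simp
    finally show "(SUP x. norm (\<integral>\<eta>. G r (x + \<eta>) \<partial>uniform_measure lborel S)) < (c + \<epsilon>) * b r" .
  qed (use S average_le integrable in \<open>auto intro: prob_space_uniform_measure\<close>)
qed

end
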